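(* Consider the following game for an adversary $\mathcal{A}=(\mathcal{A}_M,\mathcal{A}_L,\mathcal{A}_R)$ with parameter $n=n(\lambda)$: (1) The challenger samples a uniformly random invertible $U\in\mathbb{F}_2^{n\times n}$, lets $A$ be the span of its first $n/2$ columns, samples $s\leftarrow\mathsf{CS}(A)$ and $t\leftarrow\mathsf{CS}(A^\perp)$ uniformly, and sends $|A_{s,t}\rangle$ to $\mathcal{A}_M$. (2) $\mathcal{A}_M$ may abort (the game outcome is then $\bot$); otherwise it produces a bipartite state on registers $\mathbf{L}\mathbf{R}$, sending $\mathbf{L}$ to $\mathcal{A}_L$ and $\mathbf{R}$ to $\mathcal{A}_R$. (3) The challenger samples $r_L,r_R\leftarrow\mathbb{F}_2^n$ uniformly; $\mathcal{A}_L$ receives $(U,r_L)$ and outputs $b_0^l$, $\mathcal{A}_R$ receives $(U,r_R)$ and outputs $b_1^r$. The adversary wins iff $b_0^l\oplus b_1^r=\langle r_L,s\rangle\oplus\langle r_R,t\rangle$. Then for any adversary $\mathcal{A}$ with $\Pr[\text{outcome}\ne\bot]\ge 1/\mathrm{poly}(\lambda)$, $$\frac{\Pr[\text{outcome}=1]}{\Pr[\text{outcome}\ne\bot]}\le\frac12+\mathrm{negl}(\lambda).$$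
   Context: Coset state: $|A_{s,t}\rangle=\frac{1}{\sqrt{|A|}}\sum_{a\in A}(-1)^{\langle a,t\rangle}|a+s\rangle$. Canonical coset representatives: let $A\le\mathbb{F}_2^n$ be the span of the columns of an invertible $U$ with indices in a set $C$. $\mathsf{Can}_A(s):=Uw$ where $w$ is $U^{-1}s$ with the coordinates indexed by $C$ replaced by zeros; $\mathsf{Can}_{A^\perp}(s'):=U^{-t}w'$ where $w'$ is $U^{t}s'$ with coordinates not indexed by $C$ replaced by zeros; $\mathsf{CS}(A)$ and $\mathsf{CS}(A^\perp)$ are the respective images. Outcome $1/0/\bot$ means win/lose/abort. One may use as known that without the abort option, every adversary wins this game (the XOR version) with probability at most $1/2+\mathrm{negl}(\lambda)$. *)

theory Defs
  imports Complex_Main "HOL-Library.Z2" "Jordan_Normal_Form.Matrix"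
begin

definition inv_mat2 :: "bit mat \<Rightarrow> bit mat" where
  "inv_mat2 U = (SOME V. inverts_mat U V \<and> inverts_mat V U)"

definition idxC :: "nat \<Rightarrow> nat set" where
  "idxC n = {..< n div 2}"

definition subA :: "nat \<Rightarrow> bit mat \<Rightarrow> bit vec set" where
  "subA n U = {U *\<^sub>v w | w. w \<in> carrier_vec n \<and> (\<forall>i<n. i \<notin> idxC n \<longrightarrow> w $ i = 0)}"

definition CanA :: "nat \<Rightarrow> bit mat \<Rightarrow> bit vec \<Rightarrow> bit vec" where
  "CanA n U s = U *\<^sub>v (let w = inv_mat2 U *\<^sub>v s in vec n (\<lambda>i. if i \<in> idxC n then 0 else w $ i))"

definition CanAperp :: "nat \<Rightarrow> bit mat \<Rightarrow> bit vec \<Rightarrow> bit vec" where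
  "CanAperp n U s' = transpose_mat (inv_mat2 U) *\<^sub>v
     (let w' = transpose_mat U *\<^sub>v s' in vec n (\<lambda>i. if i \<in> idxC n then w' $ i else 0))"

definition CSA :: "nat \<Rightarrow> bit mat \<Rightarrow> bit vec set" where
  "CSA n U = CanA n U ` carrier_vec n"

definition CSAperp :: "nat \<Rightarrow> bit mat \<Rightarrow> bit vec set" where
  "CSAperp n U = CanAperp n U ` carrier_vec n"

definition InvMats :: "nat \<Rightarrow> bit mat set" where
  "InvMats n = {U \<in> carrier_mat n n. invertible_mat U}"

text \<open>Computational basis index i < 2^n corresponds to the bit string x with x_j = j-th binary digit of i.\<close>
definition dec :: "nat \<Rightarrow> nat \<Rightarrow> bit vec" where
  "dec n i = vec n (\<lambda>j. if odd (i div 2 ^ j) then 1 else 0)"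

definition sgn_bit :: "bit \<Rightarrow> complex" where
  "sgn_bit b = (if b = 1 then -1 else 1)"

text \<open>Coset state |A_{s,t}> = |A|^{-1/2} sum_{a in A} (-1)^{<a,t>} |a+s>.\<close>
definition coset_state :: "nat \<Rightarrow> bit mat \<Rightarrow> bit vec \<Rightarrow> bit vec \<Rightarrow> complex vec" where
  "coset_state n U s t = vec (2 ^ n) (\<lambda>i.
     (let a = dec n i + s in
      if a \<in> subA n U then sgn_bit (a \<bullet> t) / complex_of_real (sqrt (real (card (subA n U)))) else 0))"

definition norm2 :: "complex vec \<Rightarrow> real" where
  "norm2 v = (\<Sum>i<dim_vec v. (cmod (v $ i))\<^sup>2)"

definition qform :: "complex mat \<Rightarrow> complex vec \<Rightarrow> complex" where
  "qform M v = (\<Sum>i<dim_vec v. cnj (v $ i) * (M *\<^sub>v v) $ i)"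

text \<open>Kronecker (tensor) product; index of L \<otimes> R is iL * dR + iR.\<close>
definition kron :: "complex mat \<Rightarrow> complex mat \<Rightarrow> complex mat" where
  "kron M N = mat (dim_row M * dim_row N) (dim_col M * dim_col N)
     (\<lambda>(i, j). M $$ (i div dim_row N, j div dim_col N) * N $$ (i mod dim_row N, j mod dim_col N))"

definition effect :: "nat \<Rightarrow> complex mat \<Rightarrow> bool" where
  "effect d E \<longleftrightarrow> E \<in> carrier_mat d d \<and>
     (\<forall>v \<in> carrier_vec d. Im (qform E v) = 0 \<and> 0 \<le> Re (qform E v) \<and> Re (qform E v) \<le> norm2 v)"

definition povm2 :: "nat \<Rightarrow> complex mat \<Rightarrow> bit \<Rightarrow> complex mat" where
  "povm2 d E b = (if b = 1 then E else 1\<^sub>m d - E)"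

text \<open>An adversary (for one value of the security parameter):
  A_M is a quantum instrument with outcomes abort / continue; the continue branch is the
  completely positive map with Kraus operators kraus (from C^{2^n} to C^{dL} \<otimes> C^{dR}),
  the abort branch is the remaining probability mass.  A_L (resp. A_R), on input (U, r),
  performs the two-outcome measurement with effect measL U r (resp. measR U r) for output 1.\<close>
record adv =
  dL :: nat
  dR :: nat
  kraus :: "complex mat list"
  measL :: "bit mat \<Rightarrow> bit vec \<Rightarrow> complex mat"
  measR :: "bit mat \<Rightarrow> bit vec \<Rightarrow> complex mat"

definition valid_adv :: "nat \<Rightarrow> adv \<Rightarrow> bool" where
  "valid_adv n B \<longleftrightarrow>
     (\<forall>K \<in> set (kraus B). K \<in> carrier_mat (dL B * dR B) (2 ^ n)) \<and>
     (\<forall>v \<in> carrier_vec (2 ^ n). (\<Sum>K\<leftarrow>kraus B. norm2 (K *\<^sub>v v)) \<le> norm2 v) \<and>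
     (\<forall>U \<in> InvMats n. \<forall>r \<in> carrier_vec n.
        effect (dL B) (measL B U r) \<and> effect (dR B) (measR B U r))"

definition never_aborts :: "nat \<Rightarrow> adv \<Rightarrow> bool" where
  "never_aborts n B \<longleftrightarrow>
     (\<forall>v \<in> carrier_vec (2 ^ n). (\<Sum>K\<leftarrow>kraus B. norm2 (K *\<^sub>v v)) = norm2 v)"

definition game_avg :: "nat \<Rightarrow> (bit mat \<Rightarrow> bit vec \<Rightarrow> bit vec \<Rightarrow> bit vec \<Rightarrow> bit vec \<Rightarrow> real) \<Rightarrow> real" where
  "game_avg n f =
     (\<Sum>U \<in> InvMats n. \<Sum>s \<in> CSA n U. \<Sum>t \<in> CSAperp n U.
        \<Sum>rL \<in> carrier_vec n. \<Sum>rR \<in> carrier_vec n.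
          f U s t rL rR
          / (real (card (InvMats n)) * real (card (CSA n U)) * real (card (CSAperp n U))
             * real (card (carrier_vec n :: bit vec set)) ^ 2))"

definition nonabort_prob :: "nat \<Rightarrow> adv \<Rightarrow> real" where
  "nonabort_prob n B = game_avg n (\<lambda>U s t rL rR.
     (\<Sum>K\<leftarrow>kraus B. norm2 (K *\<^sub>v coset_state n U s t)))"

definition win_prob :: "nat \<Rightarrow> adv \<Rightarrow> real" where
  "win_prob n B = game_avg n (\<lambda>U s t rL rR.
     (\<Sum>K\<leftarrow>kraus B.
        \<Sum>bl \<in> (UNIV :: bit set). \<Sum>br \<in> (UNIV :: bit set).
          if bl + br = rL \<bullet> s + rR \<bullet> t
          then Re (qform (kron (povm2 (dL B) (measL B U rL) bl) (povm2 (dR B) (measR B U rR) br))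
                         (K *\<^sub>v coset_state n U s t))
          else 0))"

definition negligible :: "(nat \<Rightarrow> real) \<Rightarrow> bool" where
  "negligible f \<longleftrightarrow> (\<forall>c::nat. \<forall>\<^sub>F k in sequentially. \<bar>f k\<bar> \<le> 1 / real k ^ c)"

definition noticeable :: "(nat \<Rightarrow> real) \<Rightarrow> bool" where
  "noticeable f \<longleftrightarrow> (\<exists>c::nat. \<forall>\<^sub>F k in sequentially. f k \<ge> 1 / real k ^ c)"

end

theory Submission
  imports Defs
begin

text \<open>An adversary that may abort is turned into one that never aborts. The Kraus operators
  of its first stage are completed to a trace-preserving family: a Cholesky factorisation of
  the positive semidefinite defect \<open>I - \<Sum> K\<^sup>* K\<close> supplies rank-one operators for the abort
  branch, and these send the state to a fresh basis vector of the left register, on which the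
  left party answers with a fair coin. The new adversary wins with probability
  \<open>Pr[win] + Pr[abort] / 2\<close>, so the known bound \<open>1/2 + negl\<close> for non-aborting adversaries
  gives \<open>Pr[win] \<le> Pr[not abort] / 2 + negl\<close>; dividing by the noticeable \<open>Pr[not abort]\<close>
  keeps the error negligible.\<close>

section \<open>Positive semidefinite forms are sums of squares\<close>

definition quad_form :: "nat \<Rightarrow> (nat \<Rightarrow> nat \<Rightarrow> complex) \<Rightarrow> (nat \<Rightarrow> complex) \<Rightarrow> complex" where
  "quad_form d m v = (\<Sum>i<d. \<Sum>j<d. cnj (v i) * m i j * v j)"

definition lin_form :: "nat \<Rightarrow> (nat \<Rightarrow> complex) \<Rightarrow> (nat \<Rightarrow> complex) \<Rightarrow> complex" where
  "lin_form d r v = (\<Sum>j<d. r j * v j)"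

definition hermitian_on :: "nat \<Rightarrow> (nat \<Rightarrow> nat \<Rightarrow> complex) \<Rightarrow> bool" where
  "hermitian_on d m \<longleftrightarrow> (\<forall>i<d. \<forall>j<d. m i j = cnj (m j i))"

definition psd_on :: "nat \<Rightarrow> (nat \<Rightarrow> nat \<Rightarrow> complex) \<Rightarrow> bool" where
  "psd_on d m \<longleftrightarrow> (\<forall>v. 0 \<le> Re (quad_form d m v))"

definition supported_from :: "nat \<Rightarrow> nat \<Rightarrow> (nat \<Rightarrow> nat \<Rightarrow> complex) \<Rightarrow> bool" where
  "supported_from k d m \<longleftrightarrow> (\<forall>i<d. \<forall>j<d. i < k \<or> j < k \<longrightarrow> m i j = 0)"

lemmas unit_delta_simps = if_distrib[of cnj] if_distrib[of "\<lambda>x. x * _"] if_distrib[of "\<lambda>x. _ * x"]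

lemma hermitian_onD: "hermitian_on d m \<Longrightarrow> i < d \<Longrightarrow> j < d \<Longrightarrow> m i j = cnj (m j i)"
  unfolding hermitian_on_def by blast

lemma quad_form_unit:
  assumes "j < d"
  shows "quad_form d m (\<lambda>i. if i = j then 1 else 0) = m j j"
  using assms unfolding quad_form_def by (simp add: unit_delta_simps cong: if_cong)

lemma quad_form_split_coordinate:
  assumes k: "k < d"
  shows "quad_form d m v = cnj (v k) * m k k * v k + cnj (v k) * (\<Sum>j<d. m k j * (v(k:=0)) j)
     + (\<Sum>i<d. cnj ((v(k:=0)) i) * m i k) * v k + quad_form d m (v(k:=0))"
proof -
  let ?u = "v(k:=0)"
  have S: "\<And>f. (\<Sum>i<d. f i) = f k + (\<Sum>i\<in>{..<d}-{k}. f i)"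
    using k by (simp add: sum.remove)
  have S0: "(\<Sum>i\<in>{..<d}-{k}. f i) = (\<Sum>i<d. f i)" if "f k = 0" for f :: "nat \<Rightarrow> complex"
    using S[of f] that by simp
  have row: "(\<Sum>j<d. cnj (v i) * m i j * v j) = cnj (v i) * m i k * v k + (\<Sum>j<d. cnj (v i) * m i j * ?u j)"
    for i
  proof -
    have "(\<Sum>j\<in>{..<d}-{k}. cnj (v i) * m i j * v j) = (\<Sum>j<d. cnj (v i) * m i j * ?u j)"
      by (rule trans[OF _ S0]) (auto intro: sum.cong)
    then show ?thesis by (subst S) simp
  qed
  have "quad_form d m v = (\<Sum>i<d. cnj (v i) * m i k * v k + (\<Sum>j<d. cnj (v i) * m i j * ?u j))"
    unfolding quad_form_def using row by simp
  also have "\<dots> = (\<Sum>i<d. cnj (v i) * m i k) * v k + (\<Sum>j<d. cnj (v k) * m k j * ?u j)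
      + quad_form d m ?u"
  proof -
    have "(\<Sum>i\<in>{..<d}-{k}. \<Sum>j<d. cnj (v i) * m i j * ?u j) = quad_form d m ?u"
      unfolding quad_form_def by (rule trans[OF _ S0]) (auto intro: sum.cong)
    then have "(\<Sum>i<d. \<Sum>j<d. cnj (v i) * m i j * ?u j) = (\<Sum>j<d. cnj (v k) * m k j * ?u j) + quad_form d m ?u"
      using S[of "\<lambda>i. \<Sum>j<d. cnj (v i) * m i j * ?u j"] by (simp only:)
    then show ?thesis by (simp only: sum.distrib sum_distrib_right add.assoc)
  qed
  also have "(\<Sum>i<d. cnj (v i) * m i k) = cnj (v k) * m k k + (\<Sum>i<d. cnj (?u i) * m i k)"
    using S[of "\<lambda>i. cnj (v i) * m i k"] S0[of "\<lambda>i. cnj (?u i) * m i k"]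
    by (simp add: sum.cong[OF refl, of "{..<d}-{k}" "\<lambda>i. cnj (v i) * m i k" "\<lambda>i. cnj (?u i) * m i k"])
  finally show ?thesis by (simp add: algebra_simps sum_distrib_left fun_upd_def)
qed

lemma lin_form_split_coordinate:
  assumes k: "k < d"
  shows "lin_form d r v = r k * v k + lin_form d r (v(k:=0))"
proof -
  have S: "\<And>f. (\<Sum>i<d. f i) = f k + (\<Sum>i\<in>{..<d}-{k}. f i)"
    using k by (simp add: sum.remove)
  have "lin_form d r (v(k:=0)) = (\<Sum>i\<in>{..<d}-{k}. r i * v i)"
    unfolding lin_form_def by (subst S) (auto intro: sum.cong)
  then show ?thesis unfolding lin_form_def by (subst S) simp
qed

lemma quad_form_upd_eq:
  assumes "\<forall>i<d. m i k = 0 \<and> m k i = 0"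
  shows "quad_form d m (v(k:=c)) = quad_form d m v"
  unfolding quad_form_def using assms by (intro sum.cong refl) auto

lemma quad_form_subtract_rank_one:
  "quad_form d (\<lambda>i j. m i j - cnj (r i) * r j) v
     = quad_form d m v - complex_of_real ((cmod (lin_form d r v))\<^sup>2)"
proof -
  have "(\<Sum>i<d. \<Sum>j<d. cnj (v i) * (cnj (r i) * r j) * v j) = cnj (lin_form d r v) * lin_form d r v"
    unfolding lin_form_def
    by (simp add: sum_distrib_left sum_distrib_right cnj_sum mult.commute mult.left_commute)
  also have "\<dots> = complex_of_real ((cmod (lin_form d r v))\<^sup>2)"
    by (metis complex_norm_square mult.commute)
  finally show ?thesis
    unfolding quad_form_def by (simp add: algebra_simps sum_subtractf)
qed

lemma psd_zero_diagonal_row: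
  assumes h: "hermitian_on d m" and psd: "psd_on d m" and k: "k < d" and mkk: "m k k = 0"
    and j: "j < d"
  shows "m k j = 0"
proof (rule ccontr)
  assume z0: "m k j \<noteq> 0"
  then have jk: "j \<noteq> k" using mkk by auto
  define z where "z = m k j"
  define s :: real where "s = (Re (m j j) + 1) / (2 * (cmod z)^2)"
  define t where "t = - complex_of_real s * z"
  define v where "v = (\<lambda>i. if i = j then (1::complex) else 0)(k := t)"
  \<comment> \<open>since \<open>m k k = 0\<close>, the form at \<open>e\<^sub>j + t e\<^sub>k\<close> is affine in \<open>t\<close>; this \<open>t\<close> makes it \<open>-1\<close>\<close>
  have u: "v(k:=0) = (\<lambda>i. if i = j then 1 else 0)" using jk unfolding v_def by auto
  have mjk: "m j k = cnj z" using hermitian_onD[OF h j k] unfolding z_def .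
  have "quad_form d m v = cnj t * m k k * t + cnj t * z + cnj z * t + m j j"
    using quad_form_split_coordinate[OF k, of m v] quad_form_unit[OF j, of m] j mjk
    unfolding u by (simp add: v_def z_def unit_delta_simps cong: if_cong)
  also have "\<dots> = m j j - complex_of_real (2 * s * (cmod z)^2)"
    unfolding t_def mkk by (simp add: complex_norm_square[symmetric] mult.commute mult.left_commute)
  also have "2 * s * (cmod z)^2 = Re (m j j) + 1"
    unfolding s_def using z0 z_def by (simp add: field_simps)
  finally have "Re (quad_form d m v) = -1" by simp
  with psd show False unfolding psd_on_def by (metis neg_0_le_iff_le not_one_le_zero)
qed

lemma psd_subtract_rank_one:
  assumes psd: "psd_on d m" and k: "k < d" and rk: "r k \<noteq> 0"
    and zero: "\<forall>i<d. m i k - cnj (r i) * r k = 0 \<and> m k i - cnj (r k) * r i = 0"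
  shows "psd_on d (\<lambda>i j. m i j - cnj (r i) * r j)"
  unfolding psd_on_def
proof
  fix v
  let ?m' = "\<lambda>i j. m i j - cnj (r i) * r j"
  define c where "c = - lin_form d r (v(k:=0)) / r k"
  have "lin_form d r (v(k:=c)) = 0"
    using lin_form_split_coordinate[OF k, of r "v(k:=c)"] rk unfolding c_def by simp
  then have "quad_form d ?m' (v(k:=c)) = quad_form d m (v(k:=c))"
    by (simp add: quad_form_subtract_rank_one)
  moreover have "quad_form d ?m' (v(k:=c)) = quad_form d ?m' v"
    using zero by (intro quad_form_upd_eq) simp
  ultimately show "0 \<le> Re (quad_form d ?m' v)"
    using psd unfolding psd_on_def by metis
qed

lemma hermitian_on_subtract_rank_one:
  assumes "hermitian_on d m"
  shows "hermitian_on d (\<lambda>i j. m i j - cnj (r i) * r j)"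
  unfolding hermitian_on_def
proof (intro allI impI)
  fix i j assume "i < d" "j < d"
  then show "m i j - cnj (r i) * r j = cnj (m j i - cnj (r j) * r i)"
    using hermitian_onD[OF assms, of i j] by (simp add: mult.commute)
qed

lemma supported_from_Suc:
  assumes supp: "supported_from k d m" and rowcol: "\<forall>j<d. m k j = 0 \<and> m j k = 0"
  shows "supported_from (Suc k) d m"
  unfolding supported_from_def
proof (intro allI impI)
  fix i j assume ij: "i < d" "j < d" "i < Suc k \<or> j < Suc k"
  then consider "i < k \<or> j < k" | "i = k" | "j = k" by linarith
  then show "m i j = 0"
    using supp ij rowcol unfolding supported_from_def by cases auto
qed

lemma psd_eliminate_pivot:
  assumes h: "hermitian_on d m" and psd: "psd_on d m" and supp: "supported_from k d m"
    and k: "k < d" and pivot: "m k k \<noteq> 0"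
  defines "r \<equiv> \<lambda>j. m k j / complex_of_real (sqrt (Re (m k k)))"
  shows "psd_on d (\<lambda>i j. m i j - cnj (r i) * r j)"
    and "supported_from (Suc k) d (\<lambda>i j. m i j - cnj (r i) * r j)"
proof -
  define a where "a = Re (m k k)"
  define m' where "m' = (\<lambda>i j. m i j - cnj (r i) * r j)"
  have mkk: "m k k = complex_of_real a"
    using hermitian_onD[OF h k k] unfolding a_def by (simp add: complex_eq_iff)
  have "0 \<le> Re (quad_form d m (\<lambda>i. if i = k then 1 else 0))"
    using psd unfolding psd_on_def by blast
  then have "0 \<le> a"
    by (simp add: quad_form_unit[OF k] a_def)
  with pivot mkk have a: "0 < a" by auto
  have rk: "r k = complex_of_real (sqrt a)"
    using a by (simp add: r_def mkk real_div_sqrt flip: of_real_divide)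
  have row: "m' k j = 0" for j
    unfolding m'_def rk using a by (simp add: r_def flip: a_def)
  have col: "m' j k = 0" if "j < d" for j
    using hermitian_onD[OF hermitian_on_subtract_rank_one[OF h] that k] row by (simp add: m'_def)
  show "psd_on d (\<lambda>i j. m i j - cnj (r i) * r j)"
  proof (rule psd_subtract_rank_one[OF psd k])
    show "r k \<noteq> 0" using rk a by simp
    show "\<forall>i<d. m i k - cnj (r i) * r k = 0 \<and> m k i - cnj (r k) * r i = 0"
      using row col unfolding m'_def by simp
  qed
  have "r j = 0" if "j < k" "j < d" for j
    using supp that k unfolding supported_from_def r_def by simp
  then have "supported_from k d m'"
    using supp unfolding supported_from_def m'_def by auto
  then show "supported_from (Suc k) d (\<lambda>i j. m i j - cnj (r i) * r j)"
    using row col supported_from_Suc unfolding m'_def by blast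
qed

lemma psd_peel_coordinate:
  assumes h: "hermitian_on d m" and psd: "psd_on d m" and supp: "supported_from k d m" and k: "k < d"
  obtains r m' where "hermitian_on d m'" "psd_on d m'" "supported_from (Suc k) d m'"
    "\<And>v. quad_form d m v = quad_form d m' v + complex_of_real ((cmod (lin_form d r v))\<^sup>2)"
proof (cases "m k k = 0")
  case True
  have "\<forall>j<d. m k j = 0 \<and> m j k = 0"
  proof (intro allI impI)
    fix j assume j: "j < d"
    show "m k j = 0 \<and> m j k = 0"
      using psd_zero_diagonal_row[OF h psd k True j] hermitian_onD[OF h j k] by simp
  qed
  with supp have "supported_from (Suc k) d m"
    by (rule supported_from_Suc)
  then show ?thesis
  proof (rule that[OF h psd])
    show "quad_form d m v = quad_form d m v + complex_of_real ((cmod (lin_form d (\<lambda>_. 0) v))\<^sup>2)" for v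
      by (simp add: lin_form_def)
  qed
next
  case False
  define r where "r = (\<lambda>j. m k j / complex_of_real (sqrt (Re (m k k))))"
  show ?thesis
  proof (rule that)
    show "hermitian_on d (\<lambda>i j. m i j - cnj (r i) * r j)"
      by (rule hermitian_on_subtract_rank_one[OF h])
    show "psd_on d (\<lambda>i j. m i j - cnj (r i) * r j)"
      and "supported_from (Suc k) d (\<lambda>i j. m i j - cnj (r i) * r j)"
      using psd_eliminate_pivot[OF h psd supp k False] unfolding r_def by blast+
    show "quad_form d m v = quad_form d (\<lambda>i j. m i j - cnj (r i) * r j) v
        + complex_of_real ((cmod (lin_form d r v))\<^sup>2)" for v
      by (simp add: quad_form_subtract_rank_one)
  qed
qed

lemma psd_hermitian_sum_of_squares:
  assumes "hermitian_on d m" "psd_on d m"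
  shows "\<exists>rs. \<forall>v. quad_form d m v = complex_of_real (\<Sum>r\<leftarrow>rs. (cmod (lin_form d r v))\<^sup>2)"
proof -
  have "\<forall>m. hermitian_on d m \<and> psd_on d m \<and> supported_from k d m \<longrightarrow>
      (\<exists>rs. \<forall>v. quad_form d m v = complex_of_real (\<Sum>r\<leftarrow>rs. (cmod (lin_form d r v))\<^sup>2))"
    if "k \<le> d" for k
    using that
  proof (induction k rule: inc_induct)
    case base
    show ?case
      by (auto intro!: exI[of _ "[]"] simp: supported_from_def quad_form_def)
  next
    case (step k)
    show ?case
    proof (intro allI impI, elim conjE)
      fix m assume "hermitian_on d m" "psd_on d m" "supported_from k d m"
      then obtain r m' where m': "hermitian_on d m'" "psd_on d m'" "supported_from (Suc k) d m'"
        and split: "\<And>v. quad_form d m v = quad_form d m' v + complex_of_real ((cmod (lin_form d r v))\<^sup>2)"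
        using psd_peel_coordinate step.hyps by blast
      obtain rs where "\<forall>v. quad_form d m' v = complex_of_real (\<Sum>r\<leftarrow>rs. (cmod (lin_form d r v))\<^sup>2)"
        using step.IH m' by blast
      then show "\<exists>rs. \<forall>v. quad_form d m v = complex_of_real (\<Sum>r\<leftarrow>rs. (cmod (lin_form d r v))\<^sup>2)"
        by (intro exI[of _ "r # rs"]) (simp add: split)
    qed
  qed
  from this[of 0] show ?thesis
    using assms by (simp add: supported_from_def)
qed

section \<open>Completing a trace non-increasing family of Kraus operators\<close>

lemma quad_form_add: "quad_form d (\<lambda>i j. a i j + b i j) v = quad_form d a v + quad_form d b v"
  unfolding quad_form_def by (simp add: distrib_left distrib_right sum.distrib)

lemma quad_form_diff: "quad_form d (\<lambda>i j. a i j - b i j) v = quad_form d a v - quad_form d b v"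
  unfolding quad_form_def by (simp add: left_diff_distrib right_diff_distrib sum_subtractf)

lemma quad_form_identity: "quad_form d (\<lambda>i j. if i = j then 1 else 0) v = (\<Sum>i<d. cnj (v i) * v i)"
  unfolding quad_form_def by (simp add: unit_delta_simps cong: if_cong)

lemma norm2_conv_sum: "complex_of_real (norm2 v) = (\<Sum>i<dim_vec v. cnj (v $ i) * v $ i)"
  unfolding norm2_def of_real_sum
  by (intro sum.cong refl) (metis complex_norm_square mult.commute)

lemma mult_mat_vec_index:
  assumes "K \<in> carrier_mat D N" "w \<in> carrier_vec N" "l < D"
  shows "(K *\<^sub>v w) $ l = (\<Sum>j<N. K $$ (l, j) * w $ j)"
  using assms by (auto simp: scalar_prod_def atLeast0LessThan intro!: sum.cong)

lemma cnj_sum_list: "cnj (\<Sum>x\<leftarrow>xs. f x) = (\<Sum>x\<leftarrow>xs. cnj (f x))"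
  by (induction xs) auto

definition gram_entry :: "complex mat \<Rightarrow> nat \<Rightarrow> nat \<Rightarrow> complex" where
  "gram_entry K i j = (\<Sum>l<dim_row K. cnj (K $$ (l, i)) * K $$ (l, j))"

lemma quad_form_gram_entry:
  assumes K: "K \<in> carrier_mat D N" and w: "w \<in> carrier_vec N"
  shows "quad_form N (gram_entry K) (\<lambda>i. w $ i) = complex_of_real (norm2 (K *\<^sub>v w))"
proof -
  have "complex_of_real (norm2 (K *\<^sub>v w)) = (\<Sum>l<D. cnj ((K *\<^sub>v w) $ l) * (K *\<^sub>v w) $ l)"
    unfolding norm2_conv_sum using K by simp
  also have "\<dots> = (\<Sum>l<D. cnj (\<Sum>i<N. K $$ (l, i) * w $ i) * (\<Sum>j<N. K $$ (l, j) * w $ j))"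
    using mult_mat_vec_index[OF K w] by simp
  also have "\<dots> = (\<Sum>l<D. \<Sum>i<N. \<Sum>j<N. cnj (w $ i) * (cnj (K $$ (l, i)) * K $$ (l, j)) * w $ j)"
    by (simp add: cnj_sum sum_distrib_left sum_distrib_right mult.commute mult.left_commute)
  also have "\<dots> = (\<Sum>i<N. \<Sum>l<D. \<Sum>j<N. cnj (w $ i) * (cnj (K $$ (l, i)) * K $$ (l, j)) * w $ j)"
    by (rule sum.swap)
  also have "\<dots> = (\<Sum>i<N. \<Sum>j<N. \<Sum>l<D. cnj (w $ i) * (cnj (K $$ (l, i)) * K $$ (l, j)) * w $ j)"
    by (intro sum.cong refl sum.swap)
  also have "\<dots> = quad_form N (gram_entry K) (\<lambda>i. w $ i)"
    unfolding quad_form_def gram_entry_def using K by (simp add: sum_distrib_left sum_distrib_right)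
  finally show ?thesis by simp
qed

lemma quad_form_sum_gram_entry:
  assumes "\<forall>K\<in>set Ks. K \<in> carrier_mat (dim_row K) N" and w: "w \<in> carrier_vec N"
  shows "quad_form N (\<lambda>i j. \<Sum>K\<leftarrow>Ks. gram_entry K i j) (\<lambda>i. w $ i)
    = complex_of_real (\<Sum>K\<leftarrow>Ks. norm2 (K *\<^sub>v w))"
  using assms(1)
proof (induction Ks)
  case Nil
  then show ?case unfolding quad_form_def by simp
next
  case (Cons K Ks)
  then have K: "K \<in> carrier_mat (dim_row K) N" by simp
  have "quad_form N (\<lambda>i j. \<Sum>K'\<leftarrow>K # Ks. gram_entry K' i j) (\<lambda>i. w $ i)
      = quad_form N (gram_entry K) (\<lambda>i. w $ i)
        + quad_form N (\<lambda>i j. \<Sum>K'\<leftarrow>Ks. gram_entry K' i j) (\<lambda>i. w $ i)"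
    using quad_form_add[of N "gram_entry K" "\<lambda>i j. \<Sum>K'\<leftarrow>Ks. gram_entry K' i j"] by simp
  also have "\<dots> = complex_of_real (norm2 (K *\<^sub>v w)) + complex_of_real (\<Sum>K'\<leftarrow>Ks. norm2 (K' *\<^sub>v w))"
    using quad_form_gram_entry[OF K w] Cons by simp
  finally show ?case by simp
qed

definition completes_kraus :: "nat \<Rightarrow> complex mat list \<Rightarrow> complex vec list \<Rightarrow> bool" where
  "completes_kraus N Ks rs \<longleftrightarrow> (\<forall>r\<in>set rs. r \<in> carrier_vec N) \<and>
     (\<forall>v\<in>carrier_vec N. (\<Sum>K\<leftarrow>Ks. norm2 (K *\<^sub>v v)) + (\<Sum>r\<leftarrow>rs. (cmod (r \<bullet> v))\<^sup>2) = norm2 v)"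

lemma kraus_completion:
  assumes Ks: "\<forall>K\<in>set Ks. K \<in> carrier_mat D N"
    and trace_nonincr: "\<forall>v\<in>carrier_vec N. (\<Sum>K\<leftarrow>Ks. norm2 (K *\<^sub>v v)) \<le> norm2 v"
  shows "\<exists>rs. completes_kraus N Ks rs"
proof -
  define m where "m = (\<lambda>i j. (if i = j then 1 else 0) - (\<Sum>K\<leftarrow>Ks. gram_entry K i j))"
  have defect: "quad_form N m (\<lambda>i. w $ i)
      = complex_of_real (norm2 w - (\<Sum>K\<leftarrow>Ks. norm2 (K *\<^sub>v w)))"
    if w: "w \<in> carrier_vec N" for w
  proof -
    have Ks': "\<forall>K\<in>set Ks. K \<in> carrier_mat (dim_row K) N"
      using Ks by auto
    have "quad_form N m (\<lambda>i. w $ i) = quad_form N (\<lambda>i j. if i = j then 1 else 0) (\<lambda>i. w $ i)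
        - quad_form N (\<lambda>i j. \<Sum>K\<leftarrow>Ks. gram_entry K i j) (\<lambda>i. w $ i)"
      unfolding m_def by (rule quad_form_diff)
    also have "quad_form N (\<lambda>i j. if i = j then 1 else 0) (\<lambda>i. w $ i) = complex_of_real (norm2 w)"
      unfolding quad_form_identity norm2_conv_sum using w by simp
    also have "quad_form N (\<lambda>i j. \<Sum>K\<leftarrow>Ks. gram_entry K i j) (\<lambda>i. w $ i)
        = complex_of_real (\<Sum>K\<leftarrow>Ks. norm2 (K *\<^sub>v w))"
      by (rule quad_form_sum_gram_entry[OF Ks' w])
    finally show ?thesis by simp
  qed
  have "hermitian_on N m"
    unfolding hermitian_on_def m_def gram_entry_def
    by (simp add: cnj_sum cnj_sum_list mult.commute)
  moreover have "psd_on N m"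
    unfolding psd_on_def
  proof
    fix v
    have "quad_form N m v = quad_form N m (\<lambda>i. vec N v $ i)"
      unfolding quad_form_def by (intro sum.cong refl) auto
    then show "0 \<le> Re (quad_form N m v)"
      using defect[of "vec N v"] trace_nonincr by simp
  qed
  ultimately obtain rs where rs: "\<forall>v. quad_form N m v = complex_of_real (\<Sum>r\<leftarrow>rs. (cmod (lin_form N r v))\<^sup>2)"
    using psd_hermitian_sum_of_squares by blast
  show ?thesis
    unfolding completes_kraus_def
  proof (intro exI[of _ "map (vec N) rs"] conjI ballI)
    fix v :: "complex vec" assume v: "v \<in> carrier_vec N"
    have "vec N r \<bullet> v = lin_form N r (\<lambda>i. v $ i)" for r
      using v unfolding lin_form_def scalar_prod_def by (auto simp: atLeast0LessThan intro: sum.cong)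
    moreover have "norm2 v - (\<Sum>K\<leftarrow>Ks. norm2 (K *\<^sub>v v))
        = (\<Sum>r\<leftarrow>rs. (cmod (lin_form N r (\<lambda>i. v $ i)))\<^sup>2)"
      using defect[OF v] rs by (metis of_real_eq_iff)
    ultimately show "(\<Sum>K\<leftarrow>Ks. norm2 (K *\<^sub>v v)) + (\<Sum>r\<leftarrow>map (vec N) rs. (cmod (r \<bullet> v))\<^sup>2) = norm2 v"
      by (simp add: comp_def)
  qed auto
qed

lemma UNIV_bit: "(UNIV :: bit set) = {0, 1}"
  by auto

lemma finite_UNIV_bit [simp]: "finite (UNIV :: bit set)"
  by (simp add: UNIV_bit)

lemma card_UNIV_bit [simp]: "card (UNIV :: bit set) = 2"
  by (simp add: UNIV_bit)

lemma bit_add_self [simp]: "(b :: bit) + b = 0"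
  by (cases b) auto

lemma bij_betw_list_of_vec:
  "bij_betw list_of_vec (carrier_vec n) {xs. set xs \<subseteq> UNIV \<and> length xs = n}"
proof (rule bij_betw_byWitness[where f' = vec_of_list])
  show "\<forall>v\<in>carrier_vec n. vec_of_list (list_of_vec v) = v"
    by (simp add: vec_list)
  show "\<forall>xs\<in>{xs. set xs \<subseteq> UNIV \<and> length xs = n}. list_of_vec (vec_of_list xs) = xs"
    by (simp add: list_vec)
  show "list_of_vec ` carrier_vec n \<subseteq> {xs. set xs \<subseteq> UNIV \<and> length xs = n}"
    by auto
  show "vec_of_list ` {xs. set xs \<subseteq> UNIV \<and> length xs = n} \<subseteq> carrier_vec n"
    by (auto intro: carrier_vecI)
qed

lemma card_carrier_vec:
  assumes "finite (UNIV :: 'a set)"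
  shows "card (carrier_vec n :: 'a vec set) = card (UNIV :: 'a set) ^ n"
proof -
  have "card (carrier_vec n :: 'a vec set) = card {xs :: 'a list. set xs \<subseteq> UNIV \<and> length xs = n}"
    by (rule bij_betw_same_card[OF bij_betw_list_of_vec])
  also have "\<dots> = card (UNIV :: 'a set) ^ n"
    by (rule card_lists_length_eq[OF assms])
  finally show ?thesis .
qed

lemma finite_carrier_vec:
  assumes "finite (UNIV :: 'a set)"
  shows "finite (carrier_vec n :: 'a vec set)"
  using bij_betw_finite[OF bij_betw_list_of_vec] finite_lists_length_eq[OF assms] by (rule iffD2)

lemma finite_carrier_mat:
  assumes "finite (UNIV :: 'a set)"
  shows "finite (carrier_mat m n :: 'a mat set)"
proof (rule finite_subset)
  show "carrier_mat m n \<subseteq> mat_of_rows n ` {rs :: 'a vec list. set rs \<subseteq> carrier_vec n \<and> length rs = m}"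
  proof
    fix A :: "'a mat" assume A: "A \<in> carrier_mat m n"
    then have "A = mat_of_rows n (rows A)"
      using mat_of_rows_rows[of A] by auto
    moreover have "rows A \<in> {rs. set rs \<subseteq> carrier_vec n \<and> length rs = m}"
      using A by (auto simp: rows_def)
    ultimately show "A \<in> mat_of_rows n ` {rs. set rs \<subseteq> carrier_vec n \<and> length rs = m}"
      by blast
  qed
  show "finite (mat_of_rows n ` {rs :: 'a vec list. set rs \<subseteq> carrier_vec n \<and> length rs = m})"
    using finite_carrier_vec[OF assms] by (intro finite_imageI finite_lists_length_eq)
qed

lemma dec_carrier_vec: "dec n i \<in> carrier_vec n"
  unfolding dec_def by simp

lemma inj_on_dec: "inj_on (dec n) {..<2^n}"
proof (rule inj_onI)
  fix i j assume i: "i \<in> {..<(2::nat)^n}" and j: "j \<in> {..<(2::nat)^n}" and e: "dec n i = dec n j"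
  have "bit i b = bit j b" for b
  proof (cases "b < n")
    case True
    have "dec n i $ b = dec n j $ b" using e by simp
    then show ?thesis
      using True unfolding dec_def by (auto simp: bit_iff_odd split: if_splits)
  next
    case False
    then have "i < 2^b" "j < 2^b"
      using i j by (auto intro: less_le_trans)
    then show ?thesis by (simp add: bit_iff_odd)
  qed
  then show "i = j" by (simp add: bit_eq_iff)
qed

lemma bij_betw_dec: "bij_betw (dec n) {..<2^n} (carrier_vec n)"
proof -
  have "dec n ` {..<2^n} = carrier_vec n"
  proof (rule card_seteq)
    show "finite (carrier_vec n :: bit vec set)" by (simp add: finite_carrier_vec)
    show "dec n ` {..<2^n} \<subseteq> carrier_vec n" using dec_carrier_vec by auto
    show "card (carrier_vec n :: bit vec set) \<le> card (dec n ` {..<2^n})"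
      using card_image[OF inj_on_dec[of n]] by (simp add: card_carrier_vec)
  qed
  then show ?thesis using inj_on_dec by (simp add: bij_betw_def)
qed

lemma add_carrier_vec_cancel:
  fixes x s :: "bit vec"
  assumes "x \<in> carrier_vec n" "s \<in> carrier_vec n"
  shows "x + s + s = x"
  using assms by (intro eq_vecI) (auto simp: add.assoc)

lemma subA_subset_carrier_vec: "U \<in> carrier_mat n n \<Longrightarrow> subA n U \<subseteq> carrier_vec n"
  unfolding subA_def by auto

lemma zero_in_subA: "U \<in> carrier_mat n n \<Longrightarrow> 0\<^sub>v n \<in> subA n U"
  unfolding subA_def by (intro CollectI exI[of _ "0\<^sub>v n"]) auto

lemma card_subA_pos: "U \<in> carrier_mat n n \<Longrightarrow> 0 < card (subA n U)"
  using zero_in_subA subA_subset_carrier_vec finite_carrier_vec[OF finite_UNIV_bit]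
  by (metis card_gt_0_iff empty_iff finite_subset)

lemma card_translate_subA:
  assumes U: "U \<in> carrier_mat n n" and s: "s \<in> carrier_vec n"
  shows "card {x \<in> carrier_vec n. x + s \<in> subA n U} = card (subA n U)"
proof (rule bij_betw_same_card[of "\<lambda>x. x + s"], rule bij_betw_byWitness[where f' = "\<lambda>a. a + s"])
  show "\<forall>x\<in>{x \<in> carrier_vec n. x + s \<in> subA n U}. x + s + s = x"
    using s add_carrier_vec_cancel by blast
  show "\<forall>a\<in>subA n U. a + s + s = a"
    using s subA_subset_carrier_vec[OF U] add_carrier_vec_cancel by blast
  show "(\<lambda>a. a + s) ` subA n U \<subseteq> {x \<in> carrier_vec n. x + s \<in> subA n U}"
    using s subA_subset_carrier_vec[OF U] add_carrier_vec_cancel by auto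
qed auto

lemma norm2_coset_state:
  assumes U: "U \<in> carrier_mat n n" and s: "s \<in> carrier_vec n"
  shows "norm2 (coset_state n U s t) = 1"
proof -
  let ?A = "subA n U"
  have "(cmod (coset_state n U s t $ i))\<^sup>2 = (if dec n i + s \<in> ?A then 1 / card ?A else 0)"
    if "i < 2^n" for i
    using that unfolding coset_state_def sgn_bit_def Let_def
    by (auto simp: norm_divide power_divide)
  then have "norm2 (coset_state n U s t) = (\<Sum>i<2^n. if dec n i + s \<in> ?A then 1 / card ?A else 0)"
    unfolding norm2_def by (simp add: coset_state_def)
  also have "\<dots> = (\<Sum>x\<in>carrier_vec n. if x + s \<in> ?A then 1 / card ?A else 0)"
    by (rule sum.reindex_bij_betw[OF bij_betw_dec])
  also have "\<dots> = card {x \<in> carrier_vec n. x + s \<in> ?A} / card ?A"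
    by (simp add: sum.If_cases finite_carrier_vec Int_def conj_commute)
  also have "\<dots> = 1"
    using card_translate_subA[OF U s] card_subA_pos[OF U] by simp
  finally show ?thesis .
qed

lemma finite_InvMats: "finite (InvMats n)"
  unfolding InvMats_def
  by (rule finite_subset[OF _ finite_carrier_mat[OF finite_UNIV_bit, of n n]]) auto

lemma one_mat_in_InvMats: "1\<^sub>m n \<in> InvMats n"
  unfolding InvMats_def invertible_mat_def inverts_mat_def square_mat.simps
  by (auto intro!: exI[of _ "1\<^sub>m n"])

lemma CSA_subset_carrier_vec: "U \<in> carrier_mat n n \<Longrightarrow> CSA n U \<subseteq> carrier_vec n"
  unfolding CSA_def CanA_def by auto

lemma card_CSA_pos: "0 < card (CSA n U)"
  unfolding CSA_def using finite_carrier_vec[OF finite_UNIV_bit] zero_carrier_vec[of n]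
  by (metis card_gt_0_iff empty_iff finite_imageI image_eqI)

lemma card_CSAperp_pos: "0 < card (CSAperp n U)"
  unfolding CSAperp_def using finite_carrier_vec[OF finite_UNIV_bit] zero_carrier_vec[of n]
  by (metis card_gt_0_iff empty_iff finite_imageI image_eqI)

lemma game_avg_add_scaled:
  assumes "\<And>U s t rL rR. U \<in> InvMats n \<Longrightarrow> s \<in> CSA n U \<Longrightarrow> t \<in> CSAperp n U \<Longrightarrow>
     rL \<in> carrier_vec n \<Longrightarrow> rR \<in> carrier_vec n \<Longrightarrow> f U s t rL rR = g U s t rL rR + c * h U s t rL rR"
  shows "game_avg n f = game_avg n g + c * game_avg n h"
proof -
  let ?D = "\<lambda>U. real (card (InvMats n)) * real (card (CSA n U)) * real (card (CSAperp n U))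
             * real (card (carrier_vec n :: bit vec set)) ^ 2"
  have "game_avg n f = (\<Sum>U \<in> InvMats n. \<Sum>s \<in> CSA n U. \<Sum>t \<in> CSAperp n U.
        \<Sum>rL \<in> carrier_vec n. \<Sum>rR \<in> carrier_vec n. g U s t rL rR / ?D U + c * (h U s t rL rR / ?D U))"
    unfolding game_avg_def by (intro sum.cong refl) (simp add: assms add_divide_distrib)
  also have "\<dots> = game_avg n g + c * game_avg n h"
    unfolding game_avg_def by (simp only: sum.distrib sum_distrib_left)
  finally show ?thesis .
qed

lemma game_avg_zero:
  assumes "\<And>U s t rL rR. U \<in> InvMats n \<Longrightarrow> s \<in> CSA n U \<Longrightarrow> t \<in> CSAperp n U \<Longrightarrow>
     rL \<in> carrier_vec n \<Longrightarrow> rR \<in> carrier_vec n \<Longrightarrow> f U s t rL rR = 0"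
  shows "game_avg n f = 0"
  unfolding game_avg_def by (intro sum.neutral ballI) (simp add: assms)

lemma game_avg_one: "game_avg n (\<lambda>U s t rL rR. 1) = 1"
proof -
  let ?I = "real (card (InvMats n))" and ?C = "real (card (carrier_vec n :: bit vec set))"
  have I: "?I > 0"
    using finite_InvMats one_mat_in_InvMats card_gt_0_iff by fastforce
  have C: "?C > 0"
    by (simp add: card_carrier_vec)
  have "game_avg n (\<lambda>U s t rL rR. 1) = (\<Sum>U \<in> InvMats n. 1 / ?I)"
    unfolding game_avg_def
  proof (rule sum.cong[OF refl])
    fix U
    let ?S = "real (card (CSA n U))" and ?T = "real (card (CSAperp n U))"
    have "?S > 0" "?T > 0"
      using card_CSA_pos card_CSAperp_pos by simp_all
    then show "(\<Sum>s\<in>CSA n U. \<Sum>t\<in>CSAperp n U.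
        \<Sum>rL\<in>(carrier_vec n :: bit vec set). \<Sum>rR\<in>(carrier_vec n :: bit vec set).
        1 / (?I * ?S * ?T * ?C\<^sup>2)) = 1 / ?I"
      using I C by (simp add: field_simps power2_eq_square)
  qed
  also have "\<dots> = 1"
    using I by simp
  finally show ?thesis .
qed

section \<open>Registers with an extra flag state\<close>

lemma sum_lessThan_mono_neutral:
  fixes f :: "nat \<Rightarrow> 'a::comm_monoid_add"
  assumes "D \<le> D'" "\<And>i. D \<le> i \<Longrightarrow> i < D' \<Longrightarrow> f i = 0"
  shows "(\<Sum>i<D'. f i) = (\<Sum>i<D. f i)"
  using assms by (intro sum.mono_neutral_right) auto

definition zero_pad :: "nat \<Rightarrow> complex vec \<Rightarrow> complex vec" where
  "zero_pad D v = vec D (\<lambda>i. if i < dim_vec v then v $ i else 0)"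

lemma qform_zero_pad:
  assumes M': "M' \<in> carrier_mat D' D'" and M: "M \<in> carrier_mat D D" and DD: "D \<le> D'"
    and agree: "\<And>i j. i < D \<Longrightarrow> j < D \<Longrightarrow> M' $$ (i, j) = M $$ (i, j)"
    and v: "v \<in> carrier_vec D"
  shows "qform M' (zero_pad D' v) = qform M v"
proof -
  let ?w = "zero_pad D' v"
  have w: "?w \<in> carrier_vec D'"
    unfolding zero_pad_def by simp
  have wi: "?w $ i = (if i < D then v $ i else 0)" if "i < D'" for i
    using that v unfolding zero_pad_def by simp
  have Mw: "(M' *\<^sub>v ?w) $ i = (M *\<^sub>v v) $ i" if i: "i < D" for i
  proof -
    have "(M' *\<^sub>v ?w) $ i = (\<Sum>j<D'. M' $$ (i, j) * ?w $ j)"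
      using mult_mat_vec_index[OF M' w] i DD by simp
    also have "\<dots> = (\<Sum>j<D. M' $$ (i, j) * ?w $ j)"
      by (rule sum_lessThan_mono_neutral[OF DD]) (simp add: wi)
    also have "\<dots> = (\<Sum>j<D. M $$ (i, j) * v $ j)"
      using DD by (intro sum.cong refl) (simp add: wi agree i)
    also have "\<dots> = (M *\<^sub>v v) $ i"
      using mult_mat_vec_index[OF M v i] by simp
    finally show ?thesis .
  qed
  have "qform M' ?w = (\<Sum>i<D'. cnj (?w $ i) * (M' *\<^sub>v ?w) $ i)"
    unfolding qform_def using w by simp
  also have "\<dots> = (\<Sum>i<D. cnj (?w $ i) * (M' *\<^sub>v ?w) $ i)"
    by (rule sum_lessThan_mono_neutral[OF DD]) (simp add: wi)
  also have "\<dots> = (\<Sum>i<D. cnj (v $ i) * (M *\<^sub>v v) $ i)"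
    using DD by (intro sum.cong refl) (simp add: wi Mw)
  also have "\<dots> = qform M v"
    unfolding qform_def using v by simp
  finally show ?thesis .
qed

lemma norm2_zero_pad:
  assumes "dim_vec v \<le> D"
  shows "norm2 (zero_pad D v) = norm2 v"
proof -
  have "norm2 (zero_pad D v) = (\<Sum>i<D. (cmod (zero_pad D v $ i))\<^sup>2)"
    unfolding norm2_def zero_pad_def by simp
  also have "\<dots> = (\<Sum>i<dim_vec v. (cmod (zero_pad D v $ i))\<^sup>2)"
    by (rule sum_lessThan_mono_neutral[OF assms]) (simp add: zero_pad_def)
  also have "\<dots> = norm2 v"
    unfolding norm2_def using assms by (intro sum.cong refl) (simp add: zero_pad_def)
  finally show ?thesis .
qed

lemma qform_smult_unit_vec:
  assumes M: "M \<in> carrier_mat D D" and i: "i < D"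
  shows "qform M (c \<cdot>\<^sub>v unit_vec D i) = cnj c * M $$ (i, i) * c"
proof -
  let ?w = "c \<cdot>\<^sub>v unit_vec D i"
  have w: "?w \<in> carrier_vec D" by simp
  have "(M *\<^sub>v ?w) $ i = (\<Sum>j<D. M $$ (i, j) * ?w $ j)"
    by (rule mult_mat_vec_index[OF M w i])
  also have "\<dots> = M $$ (i, i) * c"
    using i by (simp add: unit_delta_simps cong: if_cong)
  finally have Mw: "(M *\<^sub>v ?w) $ i = M $$ (i, i) * c" .
  have "qform M ?w = (\<Sum>j<D. cnj (?w $ j) * (M *\<^sub>v ?w) $ j)"
    unfolding qform_def by simp
  also have "\<dots> = cnj c * (M *\<^sub>v ?w) $ i"
    using i by (simp add: unit_delta_simps cong: if_cong)
  finally show ?thesis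
    using Mw by simp
qed

lemma norm2_smult_unit_vec:
  assumes "i < D"
  shows "norm2 (c \<cdot>\<^sub>v unit_vec D i) = (cmod c)\<^sup>2"
proof -
  have "norm2 (c \<cdot>\<^sub>v unit_vec D i) = (\<Sum>j<D. if j = i then (cmod c)\<^sup>2 else 0)"
    unfolding norm2_def by (intro sum.cong) (auto simp: unit_vec_def)
  then show ?thesis
    using assms by simp
qed

definition pad_rows :: "nat \<Rightarrow> complex mat \<Rightarrow> complex mat" where
  "pad_rows D K = mat D (dim_col K) (\<lambda>(i, j). if i < dim_row K then K $$ (i, j) else 0)"

definition functional_to_basis :: "nat \<Rightarrow> nat \<Rightarrow> complex vec \<Rightarrow> complex mat" where
  "functional_to_basis D i r = mat D (dim_vec r) (\<lambda>(a, j). if a = i then r $ j else 0)"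

lemma pad_rows_carrier: "K \<in> carrier_mat D0 N \<Longrightarrow> pad_rows D K \<in> carrier_mat D N"
  unfolding pad_rows_def by auto

lemma functional_to_basis_carrier: "r \<in> carrier_vec N \<Longrightarrow> functional_to_basis D i r \<in> carrier_mat D N"
  unfolding functional_to_basis_def by auto

lemma pad_rows_mult_mat_vec:
  assumes K: "K \<in> carrier_mat D0 N" and D: "D0 \<le> D" and v: "v \<in> carrier_vec N"
  shows "pad_rows D K *\<^sub>v v = zero_pad D (K *\<^sub>v v)"
proof (rule eq_vecI)
  fix i assume "i < dim_vec (zero_pad D (K *\<^sub>v v))"
  then have i: "i < D" unfolding zero_pad_def by simp
  have "(pad_rows D K *\<^sub>v v) $ i = (\<Sum>j<N. pad_rows D K $$ (i, j) * v $ j)"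
    using mult_mat_vec_index[OF pad_rows_carrier[OF K] v i] .
  also have "\<dots> = (if i < D0 then (\<Sum>j<N. K $$ (i, j) * v $ j) else 0)"
    using K i unfolding pad_rows_def by (auto intro: sum.cong)
  also have "\<dots> = zero_pad D (K *\<^sub>v v) $ i"
    using i K mult_mat_vec_index[OF K v] unfolding zero_pad_def by auto
  finally show "(pad_rows D K *\<^sub>v v) $ i = zero_pad D (K *\<^sub>v v) $ i" .
qed (simp add: pad_rows_def zero_pad_def)

lemma functional_to_basis_mult_mat_vec:
  assumes r: "r \<in> carrier_vec N" and v: "v \<in> carrier_vec N"
  shows "functional_to_basis D i r *\<^sub>v v = (r \<bullet> v) \<cdot>\<^sub>v unit_vec D i"
proof (rule eq_vecI)
  fix a assume "a < dim_vec ((r \<bullet> v) \<cdot>\<^sub>v unit_vec D i)"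
  then have a: "a < D" by simp
  have "(functional_to_basis D i r *\<^sub>v v) $ a = (\<Sum>j<N. functional_to_basis D i r $$ (a, j) * v $ j)"
    using mult_mat_vec_index[OF functional_to_basis_carrier[OF r] v a] .
  also have "\<dots> = (if a = i then (\<Sum>j<N. r $ j * v $ j) else 0)"
    using r a unfolding functional_to_basis_def by (auto intro: sum.cong)
  also have "\<dots> = ((r \<bullet> v) \<cdot>\<^sub>v unit_vec D i) $ a"
    using a r v unfolding scalar_prod_def by (auto simp: atLeast0LessThan unit_vec_def)
  finally show "(functional_to_basis D i r *\<^sub>v v) $ a = ((r \<bullet> v) \<cdot>\<^sub>v unit_vec D i) $ a" .
qed (simp add: functional_to_basis_def)

definition coin_effect :: "nat \<Rightarrow> complex mat \<Rightarrow> complex mat" where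
  "coin_effect d E = mat (Suc d) (Suc d) (\<lambda>(i, j).
     if i < d \<and> j < d then E $$ (i, j) else if i = d \<and> j = d then 1/2 else 0)"

lemma coin_effect_carrier: "coin_effect d E \<in> carrier_mat (Suc d) (Suc d)"
  unfolding coin_effect_def by simp

lemma cnj_mult_self: "cnj z * z = complex_of_real ((cmod z)\<^sup>2)"
  by (metis complex_norm_square mult.commute)

lemma qform_coin_effect:
  assumes E: "E \<in> carrier_mat d d" and v: "v \<in> carrier_vec (Suc d)"
  shows "qform (coin_effect d E) v
    = qform E (vec d (\<lambda>i. v $ i)) + complex_of_real ((cmod (v $ d))\<^sup>2 / 2)"
proof -
  let ?u = "vec d (\<lambda>i. v $ i)"
  have u: "?u \<in> carrier_vec d" by simp
  have upper: "(coin_effect d E *\<^sub>v v) $ i = (E *\<^sub>v ?u) $ i" if i: "i < d" for i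
  proof -
    have "(coin_effect d E *\<^sub>v v) $ i = (\<Sum>j<Suc d. coin_effect d E $$ (i, j) * v $ j)"
      using mult_mat_vec_index[OF coin_effect_carrier v] i by simp
    also have "\<dots> = (\<Sum>j<d. E $$ (i, j) * v $ j)"
      using i unfolding coin_effect_def by simp
    also have "\<dots> = (E *\<^sub>v ?u) $ i"
      using mult_mat_vec_index[OF E u i] by simp
    finally show ?thesis .
  qed
  have last: "(coin_effect d E *\<^sub>v v) $ d = v $ d / 2"
    using mult_mat_vec_index[OF coin_effect_carrier v, of d] unfolding coin_effect_def by simp
  have "qform (coin_effect d E) v = (\<Sum>i<Suc d. cnj (v $ i) * (coin_effect d E *\<^sub>v v) $ i)"
    unfolding qform_def using v by simp
  also have "\<dots> = (\<Sum>i<d. cnj (?u $ i) * (E *\<^sub>v ?u) $ i) + cnj (v $ d) * v $ d / 2"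
    by (simp add: upper last)
  also have "(\<Sum>i<d. cnj (?u $ i) * (E *\<^sub>v ?u) $ i) = qform E ?u"
    unfolding qform_def by simp
  finally show ?thesis
    by (simp add: cnj_mult_self)
qed

lemma effect_coin_effect:
  assumes "effect d E"
  shows "effect (Suc d) (coin_effect d E)"
  unfolding effect_def
proof (intro conjI ballI coin_effect_carrier)
  have E: "E \<in> carrier_mat d d"
    using assms unfolding effect_def by simp
  fix v :: "complex vec" assume v: "v \<in> carrier_vec (Suc d)"
  let ?u = "vec d (\<lambda>i. v $ i)"
  have eu: "Im (qform E ?u) = 0" "0 \<le> Re (qform E ?u)" "Re (qform E ?u) \<le> norm2 ?u"
    using assms unfolding effect_def by simp_all
  have n: "norm2 v = norm2 ?u + (cmod (v $ d))\<^sup>2"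
    using v unfolding norm2_def by simp
  show "Im (qform (coin_effect d E) v) = 0" "0 \<le> Re (qform (coin_effect d E) v)"
    unfolding qform_coin_effect[OF E v] using eu by simp_all
  have "Re (qform (coin_effect d E) v) = Re (qform E ?u) + (cmod (v $ d))\<^sup>2 / 2"
    unfolding qform_coin_effect[OF E v] by simp
  then show "Re (qform (coin_effect d E) v) \<le> norm2 v"
    using eu(3) n zero_le_power2[of "cmod (v $ d)"] by linarith
qed

lemma povm2_carrier: "E \<in> carrier_mat d d \<Longrightarrow> povm2 d E b \<in> carrier_mat d d"
  unfolding povm2_def by auto

lemma kron_carrier:
  "P \<in> carrier_mat a a \<Longrightarrow> Q \<in> carrier_mat b b \<Longrightarrow> kron P Q \<in> carrier_mat (a * b) (a * b)"
  unfolding kron_def by auto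

lemma index_kron:
  "i < dim_row P * dim_row Q \<Longrightarrow> j < dim_col P * dim_col Q \<Longrightarrow>
   kron P Q $$ (i, j) = P $$ (i div dim_row Q, j div dim_col Q) * Q $$ (i mod dim_row Q, j mod dim_col Q)"
  unfolding kron_def by simp

definition win_weight :: "nat \<Rightarrow> nat \<Rightarrow> complex mat \<Rightarrow> complex mat \<Rightarrow> bit \<Rightarrow> complex vec \<Rightarrow> real" where
  "win_weight dl dr E F \<tau> \<phi> = (\<Sum>bl \<in> UNIV. \<Sum>br \<in> UNIV.
     if bl + br = \<tau> then Re (qform (kron (povm2 dl E bl) (povm2 dr F br)) \<phi>) else 0)"

lemma win_weight_zero_pad:
  assumes E: "E \<in> carrier_mat dl dl" and F: "F \<in> carrier_mat dr dr" and \<phi>: "\<phi> \<in> carrier_vec (dl * dr)"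
  shows "win_weight (Suc dl) dr (coin_effect dl E) F \<tau> (zero_pad (Suc dl * dr) \<phi>) = win_weight dl dr E F \<tau> \<phi>"
proof -
  have "qform (kron (povm2 (Suc dl) (coin_effect dl E) bl) (povm2 dr F br)) (zero_pad (Suc dl * dr) \<phi>)
      = qform (kron (povm2 dl E bl) (povm2 dr F br)) \<phi>" for bl br
  proof (rule qform_zero_pad)
    show "kron (povm2 (Suc dl) (coin_effect dl E) bl) (povm2 dr F br) \<in> carrier_mat (Suc dl * dr) (Suc dl * dr)"
      by (intro kron_carrier povm2_carrier coin_effect_carrier F)
    show "kron (povm2 dl E bl) (povm2 dr F br) \<in> carrier_mat (dl * dr) (dl * dr)"
      by (intro kron_carrier povm2_carrier E F)
    fix i j assume i: "i < dl * dr" and j: "j < dl * dr"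
    then have "i div dr < dl" "j div dr < dl"
      by (simp_all add: less_mult_imp_div_less)
    then show "kron (povm2 (Suc dl) (coin_effect dl E) bl) (povm2 dr F br) $$ (i, j)
        = kron (povm2 dl E bl) (povm2 dr F br) $$ (i, j)"
      using E F i j by (simp add: index_kron povm2_def coin_effect_def)
  qed (use \<phi> in simp_all)
  then show ?thesis
    by (simp only: win_weight_def)
qed

lemma win_weight_coin:
  assumes F: "F \<in> carrier_mat dr dr" and dr: "0 < dr"
  shows "win_weight (Suc dl) dr (coin_effect dl E) F \<tau> (c \<cdot>\<^sub>v unit_vec (Suc dl * dr) (dl * dr))
    = (cmod c)\<^sup>2 / 2"
proof -
  have idx: "dl * dr < Suc dl * dr"
    using dr by simp
  have "Re (qform (kron (povm2 (Suc dl) (coin_effect dl E) bl) (povm2 dr F br))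
        (c \<cdot>\<^sub>v unit_vec (Suc dl * dr) (dl * dr)))
      = (cmod c)\<^sup>2 / 2 * Re (povm2 dr F br $$ (0, 0))" for bl br
  proof -
    let ?M = "kron (povm2 (Suc dl) (coin_effect dl E) bl) (povm2 dr F br)"
    have M: "?M \<in> carrier_mat (Suc dl * dr) (Suc dl * dr)"
      by (intro kron_carrier povm2_carrier coin_effect_carrier F)
    have "qform ?M (c \<cdot>\<^sub>v unit_vec (Suc dl * dr) (dl * dr)) = cnj c * ?M $$ (dl * dr, dl * dr) * c"
      by (rule qform_smult_unit_vec[OF M idx])
    also have "\<dots> = (cnj c * c) * ?M $$ (dl * dr, dl * dr)"
      by (simp only: ac_simps)
    also have "?M $$ (dl * dr, dl * dr) = povm2 dr F br $$ (0, 0) / 2"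
      using F idx dr by (simp add: index_kron povm2_def coin_effect_def)
    finally have "qform ?M (c \<cdot>\<^sub>v unit_vec (Suc dl * dr) (dl * dr))
        = complex_of_real ((cmod c)\<^sup>2) * (povm2 dr F br $$ (0, 0) / 2)"
      by (simp only: cnj_mult_self)
    then have "Re (qform ?M (c \<cdot>\<^sub>v unit_vec (Suc dl * dr) (dl * dr)))
        = Re (complex_of_real ((cmod c)\<^sup>2) * (povm2 dr F br $$ (0, 0) / 2))"
      by (rule arg_cong)
    also have "\<dots> = (cmod c)\<^sup>2 / 2 * Re (povm2 dr F br $$ (0, 0))"
      by simp
    finally show ?thesis .
  qed
  then have "win_weight (Suc dl) dr (coin_effect dl E) F \<tau> (c \<cdot>\<^sub>v unit_vec (Suc dl * dr) (dl * dr))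
      = (\<Sum>bl \<in> UNIV. \<Sum>br \<in> UNIV. if bl + br = \<tau> then (cmod c)\<^sup>2 / 2 * Re (povm2 dr F br $$ (0, 0)) else 0)"
    by (simp only: win_weight_def)
  also have "\<dots> = (cmod c)\<^sup>2 / 2 * Re (povm2 dr F 0 $$ (0, 0) + povm2 dr F 1 $$ (0, 0))"
    by (cases \<tau>) (simp_all add: UNIV_bit algebra_simps)
  also have "povm2 dr F 0 $$ (0, 0) + povm2 dr F 1 $$ (0, 0) = 1"
    using F dr unfolding povm2_def by simp
  finally show ?thesis by simp
qed

section \<open>The non-aborting adversary\<close>

definition abort_functionals :: "nat \<Rightarrow> adv \<Rightarrow> complex vec list" where
  "abort_functionals n B = (SOME rs. completes_kraus (2^n) (kraus B) rs)"

lemma abort_functionals: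
  assumes "valid_adv n B"
  shows "\<forall>r\<in>set (abort_functionals n B). r \<in> carrier_vec (2^n)"
    and "v \<in> carrier_vec (2^n) \<Longrightarrow>
      (\<Sum>K\<leftarrow>kraus B. norm2 (K *\<^sub>v v)) + (\<Sum>r\<leftarrow>abort_functionals n B. (cmod (r \<bullet> v))\<^sup>2) = norm2 v"
proof -
  have "\<exists>rs. completes_kraus (2^n) (kraus B) rs"
    using assms unfolding valid_adv_def by (intro kraus_completion) auto
  then have "completes_kraus (2^n) (kraus B) (abort_functionals n B)"
    unfolding abort_functionals_def by (rule someI_ex)
  then show "\<forall>r\<in>set (abort_functionals n B). r \<in> carrier_vec (2^n)"
    and "v \<in> carrier_vec (2^n) \<Longrightarrow>
      (\<Sum>K\<leftarrow>kraus B. norm2 (K *\<^sub>v v)) + (\<Sum>r\<leftarrow>abort_functionals n B. (cmod (r \<bullet> v))\<^sup>2) = norm2 v"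
    unfolding completes_kraus_def by blast+
qed

text \<open>The flag state is \<open>|dL B\<rangle> \<otimes> |0\<rangle>\<close>, whose index in the product register is \<open>dL B * dR B\<close>.\<close>

definition no_abort_ext :: "nat \<Rightarrow> adv \<Rightarrow> adv" where
  "no_abort_ext n B = \<lparr>dL = Suc (dL B), dR = dR B,
     kraus = map (pad_rows (Suc (dL B) * dR B)) (kraus B)
       @ map (functional_to_basis (Suc (dL B) * dR B) (dL B * dR B)) (abort_functionals n B),
     measL = (\<lambda>U r. coin_effect (dL B) (measL B U r)), measR = measR B\<rparr>"

lemma kraus_carrier_mat: "valid_adv n B \<Longrightarrow> K \<in> set (kraus B) \<Longrightarrow> K \<in> carrier_mat (dL B * dR B) (2^n)"
  unfolding valid_adv_def by auto

lemma sum_list_map_cong: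
  "(\<And>x. x \<in> set xs \<Longrightarrow> f x = g x) \<Longrightarrow> (\<Sum>x\<leftarrow>xs. f x) = (\<Sum>x\<leftarrow>xs. g x)"
  by (metis map_cong)

lemma kraus_no_abort_ext:
  "(\<Sum>K\<leftarrow>kraus (no_abort_ext n B). f K)
    = (\<Sum>K\<leftarrow>kraus B. f (pad_rows (Suc (dL B) * dR B) K))
      + (\<Sum>r\<leftarrow>abort_functionals n B. f (functional_to_basis (Suc (dL B) * dR B) (dL B * dR B) r))"
  unfolding no_abort_ext_def by (simp only: adv.select_convs map_append sum_list_append map_map comp_def)

lemma norm2_sum_no_abort_ext:
  assumes B: "valid_adv n B" and dR: "0 < dR B" and v: "v \<in> carrier_vec (2^n)"
  shows "(\<Sum>K\<leftarrow>kraus (no_abort_ext n B). norm2 (K *\<^sub>v v)) = norm2 v"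
proof -
  let ?D = "Suc (dL B) * dR B"
  have le: "dL B * dR B \<le> ?D"
    by simp
  have pad: "(\<Sum>K\<leftarrow>kraus B. norm2 (pad_rows ?D K *\<^sub>v v)) = (\<Sum>K\<leftarrow>kraus B. norm2 (K *\<^sub>v v))"
  proof (rule sum_list_map_cong)
    fix K assume "K \<in> set (kraus B)"
    then have K: "K \<in> carrier_mat (dL B * dR B) (2^n)"
      by (rule kraus_carrier_mat[OF B])
    show "norm2 (pad_rows ?D K *\<^sub>v v) = norm2 (K *\<^sub>v v)"
      unfolding pad_rows_mult_mat_vec[OF K le v] using K le by (intro norm2_zero_pad) simp
  qed
  have abort: "(\<Sum>r\<leftarrow>abort_functionals n B. norm2 (functional_to_basis ?D (dL B * dR B) r *\<^sub>v v))
      = (\<Sum>r\<leftarrow>abort_functionals n B. (cmod (r \<bullet> v))\<^sup>2)"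
  proof (rule sum_list_map_cong)
    fix r assume "r \<in> set (abort_functionals n B)"
    then have r: "r \<in> carrier_vec (2^n)"
      using abort_functionals(1)[OF B] by blast
    show "norm2 (functional_to_basis ?D (dL B * dR B) r *\<^sub>v v) = (cmod (r \<bullet> v))\<^sup>2"
      unfolding functional_to_basis_mult_mat_vec[OF r v]
      by (intro norm2_smult_unit_vec) (use dR in simp)
  qed
  show ?thesis
    unfolding kraus_no_abort_ext pad abort by (rule abort_functionals(2)[OF B v])
qed

lemma valid_no_abort_ext:
  assumes B: "valid_adv n B" and dR: "0 < dR B"
  shows "valid_adv n (no_abort_ext n B)" "never_aborts n (no_abort_ext n B)"
proof -
  show "never_aborts n (no_abort_ext n B)"
    unfolding never_aborts_def using norm2_sum_no_abort_ext[OF B dR] by blast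
  have "\<forall>K \<in> set (kraus (no_abort_ext n B)). K \<in> carrier_mat (Suc (dL B) * dR B) (2^n)"
    using kraus_carrier_mat[OF B] abort_functionals(1)[OF B] unfolding no_abort_ext_def
    by (auto intro: pad_rows_carrier functional_to_basis_carrier)
  then show "valid_adv n (no_abort_ext n B)"
    using B norm2_sum_no_abort_ext[OF B dR] unfolding valid_adv_def
    by (auto simp: no_abort_ext_def intro: effect_coin_effect)
qed

lemma no_abort_ext_sel [simp]:
  "dL (no_abort_ext n B) = Suc (dL B)" "dR (no_abort_ext n B) = dR B"
  "measL (no_abort_ext n B) U r = coin_effect (dL B) (measL B U r)"
  "measR (no_abort_ext n B) = measR B"
  unfolding no_abort_ext_def by simp_all

definition win_term :: "nat \<Rightarrow> adv \<Rightarrow> bit mat \<Rightarrow> bit vec \<Rightarrow> bit vec \<Rightarrow> bit vec \<Rightarrow> bit vec \<Rightarrow> real" where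
  "win_term n B U s t rL rR = (\<Sum>K\<leftarrow>kraus B.
     win_weight (dL B) (dR B) (measL B U rL) (measR B U rR) (rL \<bullet> s + rR \<bullet> t) (K *\<^sub>v coset_state n U s t))"

lemma win_prob_eq_game_avg: "win_prob n B = game_avg n (win_term n B)"
  unfolding win_prob_def win_term_def win_weight_def ..

lemma sum_list_divide: "(\<Sum>x\<leftarrow>xs. f x / c) = (\<Sum>x\<leftarrow>xs. f x) / (c :: real)"
  by (induction xs) (simp_all add: add_divide_distrib)

lemma win_term_no_abort_ext:
  assumes B: "valid_adv n B" and dR: "0 < dR B" and U: "U \<in> InvMats n" and s: "s \<in> CSA n U"
    and rL: "rL \<in> carrier_vec n" and rR: "rR \<in> carrier_vec n"
  shows "win_term n (no_abort_ext n B) U s t rL rR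
    = win_term n B U s t rL rR + (1 - (\<Sum>K\<leftarrow>kraus B. norm2 (K *\<^sub>v coset_state n U s t))) / 2"
proof -
  let ?\<psi> = "coset_state n U s t" and ?\<tau> = "rL \<bullet> s + rR \<bullet> t"
  let ?E = "measL B U rL" and ?F = "measR B U rR" and ?D = "Suc (dL B) * dR B"
  let ?w = "win_weight (Suc (dL B)) (dR B) (coin_effect (dL B) ?E) ?F ?\<tau>"
  have E: "?E \<in> carrier_mat (dL B) (dL B)" and F: "?F \<in> carrier_mat (dR B) (dR B)"
    using B U rL rR unfolding valid_adv_def effect_def by auto
  have Uc: "U \<in> carrier_mat n n"
    using U unfolding InvMats_def by simp
  have \<psi>: "?\<psi> \<in> carrier_vec (2^n)"
    unfolding coset_state_def by simp
  have "norm2 ?\<psi> = 1"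
    using norm2_coset_state[OF Uc] CSA_subset_carrier_vec[OF Uc] s by blast
  then have abort_mass: "(\<Sum>r\<leftarrow>abort_functionals n B. (cmod (r \<bullet> ?\<psi>))\<^sup>2)
      = 1 - (\<Sum>K\<leftarrow>kraus B. norm2 (K *\<^sub>v ?\<psi>))"
    using abort_functionals(2)[OF B \<psi>] by simp
  have le: "dL B * dR B \<le> ?D"
    by simp
  have "(\<Sum>K\<leftarrow>kraus B. ?w (pad_rows ?D K *\<^sub>v ?\<psi>))
      = (\<Sum>K\<leftarrow>kraus B. win_weight (dL B) (dR B) ?E ?F ?\<tau> (K *\<^sub>v ?\<psi>))"
  proof (rule sum_list_map_cong)
    fix K assume "K \<in> set (kraus B)"
    then have K: "K \<in> carrier_mat (dL B * dR B) (2^n)"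
      by (rule kraus_carrier_mat[OF B])
    show "?w (pad_rows ?D K *\<^sub>v ?\<psi>) = win_weight (dL B) (dR B) ?E ?F ?\<tau> (K *\<^sub>v ?\<psi>)"
      unfolding pad_rows_mult_mat_vec[OF K le \<psi>] using K \<psi> by (intro win_weight_zero_pad[OF E F]) simp
  qed
  moreover have "(\<Sum>r\<leftarrow>abort_functionals n B. ?w (functional_to_basis ?D (dL B * dR B) r *\<^sub>v ?\<psi>))
      = (\<Sum>r\<leftarrow>abort_functionals n B. (cmod (r \<bullet> ?\<psi>))\<^sup>2 / 2)"
  proof (rule sum_list_map_cong)
    fix r assume "r \<in> set (abort_functionals n B)"
    then have r: "r \<in> carrier_vec (2^n)"
      using abort_functionals(1)[OF B] by blast
    show "?w (functional_to_basis ?D (dL B * dR B) r *\<^sub>v ?\<psi>) = (cmod (r \<bullet> ?\<psi>))\<^sup>2 / 2"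
      unfolding functional_to_basis_mult_mat_vec[OF r \<psi>] by (rule win_weight_coin[OF F dR])
  qed
  ultimately show ?thesis
    unfolding win_term_def kraus_no_abort_ext no_abort_ext_sel
    by (simp only: sum_list_divide abort_mass)
qed

lemma win_prob_no_abort_ext:
  assumes B: "valid_adv n B" and dR: "0 < dR B"
  shows "win_prob n (no_abort_ext n B) = win_prob n B + (1 - nonabort_prob n B) / 2"
proof -
  let ?p = "\<lambda>U s t rL rR. \<Sum>K\<leftarrow>kraus B. norm2 (K *\<^sub>v coset_state n U s t)"
  have "win_prob n (no_abort_ext n B)
      = win_prob n B + 1/2 * game_avg n (\<lambda>U s t rL rR. 1 + (-1) * ?p U s t rL rR)"
    unfolding win_prob_eq_game_avg
    by (rule game_avg_add_scaled) (simp add: win_term_no_abort_ext[OF B dR] diff_divide_distrib)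
  also have "game_avg n (\<lambda>U s t rL rR. 1 + (-1) * ?p U s t rL rR)
      = game_avg n (\<lambda>U s t rL rR. 1) + (-1) * game_avg n ?p"
    by (rule game_avg_add_scaled) simp
  finally show ?thesis
    unfolding game_avg_one nonabort_prob_def by simp
qed

text \<open>A zero-dimensional right register leaves no room for the flag state; such an adversary
  never continues, so it may be replaced by one with a one-dimensional right register.\<close>

definition nontrivial_right :: "adv \<Rightarrow> adv" where
  "nontrivial_right B =
     (if dR B = 0 then B\<lparr>dR := 1, kraus := [], measR := (\<lambda>U r. 0\<^sub>m 1 1)\<rparr> else B)"

lemma norm2_nonneg: "0 \<le> norm2 v"
  unfolding norm2_def by (simp add: sum_nonneg)

lemma effect_zero_mat: "effect d (0\<^sub>m d d)"
proof -
  have "qform (0\<^sub>m d d) v = 0" if "v \<in> carrier_vec d" for v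
    using that unfolding qform_def by (simp add: scalar_prod_def)
  then show ?thesis
    unfolding effect_def using norm2_nonneg by simp
qed

lemma valid_nontrivial_right:
  assumes "valid_adv n B"
  shows "valid_adv n (nontrivial_right B)" "0 < dR (nontrivial_right B)"
  using assms effect_zero_mat[of 1] norm2_nonneg
  unfolding nontrivial_right_def valid_adv_def by auto

lemma win_term_dR_zero:
  assumes "valid_adv n B" "dR B = 0"
  shows "win_term n B U s t rL rR = 0"
proof -
  have "win_weight (dL B) 0 E F \<tau> (K *\<^sub>v v) = 0" if "K \<in> set (kraus B)" for E F \<tau> K v
  proof -
    have "dim_row K = 0"
      using kraus_carrier_mat[OF assms(1) that] assms(2) by simp
    then show ?thesis
      unfolding win_weight_def qform_def by (simp cong: if_cong)
  qed
  then show ?thesis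
    unfolding win_term_def using assms(2) by (simp cong: map_cong)
qed

lemma win_nonabort_prob_nontrivial_right:
  assumes "valid_adv n B"
  shows "win_prob n (nontrivial_right B) = win_prob n B"
    and "nonabort_prob n (nontrivial_right B) = nonabort_prob n B"
proof -
  have "win_prob n B = 0" "nonabort_prob n B = 0" if "dR B = 0"
  proof -
    show "win_prob n B = 0"
      unfolding win_prob_eq_game_avg by (rule game_avg_zero) (use assms that win_term_dR_zero in blast)
    have "norm2 (K *\<^sub>v v) = 0" if "K \<in> set (kraus B)" for K v
      using kraus_carrier_mat[OF assms that] \<open>dR B = 0\<close> unfolding norm2_def by simp
    then show "nonabort_prob n B = 0"
      unfolding nonabort_prob_def by (intro game_avg_zero) (simp cong: map_cong)
  qed
  moreover have "win_prob n (nontrivial_right B) = 0" "nonabort_prob n (nontrivial_right B) = 0"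
    if "dR B = 0"
    using that unfolding nontrivial_right_def win_prob_def nonabort_prob_def game_avg_def by simp_all
  ultimately show "win_prob n (nontrivial_right B) = win_prob n B"
    and "nonabort_prob n (nontrivial_right B) = nonabort_prob n B"
    unfolding nontrivial_right_def by (cases "dR B = 0"; simp)+
qed

definition completed_adv :: "nat \<Rightarrow> adv \<Rightarrow> adv" where
  "completed_adv n B = no_abort_ext n (nontrivial_right B)"

lemma valid_completed_adv:
  assumes "valid_adv n B"
  shows "valid_adv n (completed_adv n B) \<and> never_aborts n (completed_adv n B)"
  unfolding completed_adv_def using valid_no_abort_ext valid_nontrivial_right[OF assms] by blast

lemma win_prob_completed_adv:
  assumes "valid_adv n B"
  shows "win_prob n (completed_adv n B) = win_prob n B + (1 - nonabort_prob n B) / 2"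
  unfolding completed_adv_def
  using win_prob_no_abort_ext[OF valid_nontrivial_right[OF assms]] win_nonabort_prob_nontrivial_right[OF assms]
  by simp

lemma negligible_mono:
  assumes "negligible f" "\<forall>\<^sub>F k in sequentially. \<bar>g k\<bar> \<le> \<bar>f k\<bar>"
  shows "negligible g"
  unfolding negligible_def
proof
  fix c :: nat
  have "\<forall>\<^sub>F k in sequentially. \<bar>f k\<bar> \<le> 1 / real k ^ c"
    using assms(1) unfolding negligible_def by blast
  with assms(2) show "\<forall>\<^sub>F k in sequentially. \<bar>g k\<bar> \<le> 1 / real k ^ c"
    by eventually_elim linarith
qed

lemma noticeable_eventually_pos:
  assumes "noticeable p"
  shows "\<forall>\<^sub>F k in sequentially. p k > 0"
proof -
  obtain d :: nat where "\<forall>\<^sub>F k in sequentially. p k \<ge> 1 / real k ^ d"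
    using assms unfolding noticeable_def by blast
  moreover have "\<forall>\<^sub>F k in sequentially. k \<ge> 1"
    by (rule eventually_ge_at_top)
  ultimately show ?thesis
  proof eventually_elim
    case (elim k)
    then have "0 < 1 / real k ^ d"
      by simp
    with elim show ?case
      by linarith
  qed
qed

lemma negligible_divide_noticeable:
  assumes f: "negligible f" and p: "noticeable p"
  shows "negligible (\<lambda>k. f k / p k)"
  unfolding negligible_def
proof
  fix c :: nat
  obtain d :: nat where d: "\<forall>\<^sub>F k in sequentially. p k \<ge> 1 / real k ^ d"
    using p unfolding noticeable_def by blast
  have "\<forall>\<^sub>F k in sequentially. \<bar>f k\<bar> \<le> 1 / real k ^ (c + d)"
    using f unfolding negligible_def by blast
  then show "\<forall>\<^sub>F k in sequentially. \<bar>f k / p k\<bar> \<le> 1 / real k ^ c"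
    using d eventually_ge_at_top[of 1] noticeable_eventually_pos[OF p]
  proof eventually_elim
    case (elim k)
    then have kd: "real k ^ d > 0" and ppos: "p k > 0"
      by simp_all
    have "1 / p k \<le> real k ^ d"
      using elim kd ppos by (simp add: divide_le_eq mult.commute)
    then have "\<bar>f k / p k\<bar> \<le> \<bar>f k\<bar> * real k ^ d"
      using ppos mult_left_mono[of "1 / p k" "real k ^ d" "\<bar>f k\<bar>"] by simp
    also have "\<dots> \<le> 1 / real k ^ (c + d) * real k ^ d"
      using elim kd by (intro mult_right_mono) auto
    also have "\<dots> = 1 / real k ^ c"
      using kd by (simp add: power_add)
    finally show ?case .
  qed
qed

lemma noticeable_ratio_bound:
  assumes \<epsilon>: "negligible \<epsilon>" and p: "noticeable p" and w: "\<forall>k. w k \<le> c * p k + \<epsilon> k"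
  shows "\<exists>\<epsilon>'. negligible \<epsilon>' \<and> (\<forall>k. w k / p k \<le> c + \<epsilon>' k)"
proof -
  \<comment> \<open>only eventual values matter, so the junk values of \<open>w k / p k\<close> where \<open>p k \<le> 0\<close> are harmless\<close>
  define \<epsilon>' where "\<epsilon>' k = max 0 (w k / p k - c)" for k
  have "negligible \<epsilon>'"
  proof (rule negligible_mono[OF negligible_divide_noticeable[OF \<epsilon> p]])
    show "\<forall>\<^sub>F k in sequentially. \<bar>\<epsilon>' k\<bar> \<le> \<bar>\<epsilon> k / p k\<bar>"
      using noticeable_eventually_pos[OF p]
    proof eventually_elim
      case (elim k)
      have "w k / p k - c = (w k - c * p k) / p k"
        using elim by (simp add: field_simps)
      also have "\<dots> \<le> \<epsilon> k / p k"
        using elim w by (intro divide_right_mono) (auto simp: algebra_simps)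
      finally have "w k / p k - c \<le> \<bar>\<epsilon> k / p k\<bar>"
        by (meson abs_ge_self order_trans)
      then show ?case
        unfolding \<epsilon>'_def by simp
    qed
  qed
  moreover have "\<forall>k. w k / p k \<le> c + \<epsilon>' k"
    unfolding \<epsilon>'_def by (simp add: max_def)
  ultimately show ?thesis by blast
qed

theorem mainTheorem3:
  fixes n :: "nat \<Rightarrow> nat" and Adv :: "nat \<Rightarrow> adv"
  assumes known_no_abort:
    "\<And>B :: nat \<Rightarrow> adv. (\<forall>k. valid_adv (n k) (B k) \<and> never_aborts (n k) (B k)) \<Longrightarrow>
       \<exists>\<epsilon>. negligible \<epsilon> \<and> (\<forall>k. win_prob (n k) (B k) \<le> 1/2 + \<epsilon> k)"
    and valid: "\<forall>k. valid_adv (n k) (Adv k)"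
    and nonabort: "noticeable (\<lambda>k. nonabort_prob (n k) (Adv k))"
  shows "\<exists>\<epsilon>. negligible \<epsilon> \<and>
           (\<forall>k. win_prob (n k) (Adv k) / nonabort_prob (n k) (Adv k) \<le> 1/2 + \<epsilon> k)"
proof -
  have "\<forall>k. valid_adv (n k) (completed_adv (n k) (Adv k)) \<and> never_aborts (n k) (completed_adv (n k) (Adv k))"
    using valid valid_completed_adv by blast
  then obtain \<epsilon> where \<epsilon>: "negligible \<epsilon>"
    and bound: "\<forall>k. win_prob (n k) (completed_adv (n k) (Adv k)) \<le> 1/2 + \<epsilon> k"
    using known_no_abort[of "\<lambda>k. completed_adv (n k) (Adv k)"] by blast
  have "\<forall>k. win_prob (n k) (Adv k) \<le> 1/2 * nonabort_prob (n k) (Adv k) + \<epsilon> k"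
  proof
    fix k
    show "win_prob (n k) (Adv k) \<le> 1/2 * nonabort_prob (n k) (Adv k) + \<epsilon> k"
      using bound[rule_format, of k] win_prob_completed_adv[OF valid[rule_format, of k]]
      by (simp add: field_simps)
  qed
  then show ?thesis
    by (rule noticeable_ratio_bound[OF \<epsilon> nonabort])
qed

end
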